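(* Let $d\geq 3$, $u>0$, and let $\mu$ have distribution $\mathrm{Pois}(u,W^* )$, with law $\mathbb P$. Let $G$ be the graph on $\mathrm{Supp}(\mu)$ defined below, with graph distance $\rho$. Let $E$ be the event that $\rho(v,w)\leq s_d-1$ for all $v,w\in\mathrm{Supp}(\mu)$. For $x,y\in\mathbb Z^d$, let $S(x,y)\subset W^*$ be the set of trajectories that visit both $x$ and $y$. Then for all $x,y\in\mathbb Z^d$, $$\mathbb P(\{x,y\in\mathcal I\}\cap E)\leq \sum_{n=0}^{s_d-1}\ \sum_{z_1,\ldots,z_n\in\mathbb Z^d}\ \prod_{i=0}^n\mathbb E\big[\mu(S(z_i,z_{i+1}))\big],$$ where $z_0=x$ and $z_{n+1}=y$. The $n=0$ term is $\mathbb E[\mu(S(x,y))]$.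
   Context: $s_d=\lceil (d-2)/2\rceil$. $\mathbb Z^d$ carries the sup norm. $W$ is the space of doubly-infinite nearest-neighbour trajectories in $\mathbb Z^d$ tending to infinity at times $\pm\infty$, and $W^*$ is $W$ modulo time shift. The Green function is $g(x,y)=\sum_{t\ge0}P_x(X(t)=y)$ for simple random walk $X$. For finite $K$, $\mathrm{cap}(K)=\sum_{x\in K}P_x(X(t)\notin K\ \forall t\ge1)$, and $e_K(x)=P_x(X(t)\notin K\ \forall t\ge 1)I(x\in K)$. $\mathrm{Pois}(u,W^* )$ is the law of the Poisson point measure $\mu$ on $W^*$ (random interlacement point process at level $u$) such that, for each finite $A$: - the number $N_A$ of trajectories hitting $A$ is Poisson$(u\,\mathrm{cap}(A))$; - parametrizing these trajectories so that they are at time $0$ at their first entrance into $A$, the entrance points are i.i.d. with law $e_A/\mathrm{cap}(A)$; - the forward parts are independent simple random walks; - the backward parts are independent walks conditioned never to return to $A$. $\mathcal I=\bigcup_{w\in\mathrm{Supp}(\mu)}\mathrm{range}(w)$. $G$ is the graph whose vertices are the trajectories in $\mathrm{Supp}(\mu)$, with distinct trajectories adjacent iff their ranges intersect. *)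

theory Defs
  imports "HOL-Probability.Probability"
begin

text \<open>Points of Z^d are vectors int^'d; the dimension is d = CARD('d).\<close>

type_synonym 'd pt = "int ^ 'd"

definition s_d :: "nat \<Rightarrow> nat" where
  "s_d d = nat \<lceil>(real d - 2) / 2\<rceil>"

definition unit_steps :: "'d::finite pt set" where
  "unit_steps = {axis i 1 | i. True} \<union> {axis i (-1) | i. True}"

definition paths :: "(nat \<Rightarrow> 'd::finite pt) measure" where
  "paths = (\<Pi>\<^sub>M t\<in>(UNIV::nat set). count_space UNIV)"

definition srw :: "'d::finite pt \<Rightarrow> (nat \<Rightarrow> 'd pt) measure" where
  "srw x = distr (\<Pi>\<^sub>M t\<in>(UNIV::nat set). measure_pmf (pmf_of_set unit_steps)) paths
                 (\<lambda>\<xi> t. x + (\<Sum>s<t. \<xi> s))"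

definition eqm :: "'d::finite pt set \<Rightarrow> 'd pt \<Rightarrow> real" where
  "eqm K x = (if x \<in> K then measure (srw x) {X \<in> space paths. \<forall>t\<ge>1. X t \<notin> K} else 0)"

definition cap :: "'d::finite pt set \<Rightarrow> real" where
  "cap K = (\<Sum>x\<in>K. eqm K x)"

text \<open>W: doubly infinite nearest-neighbour trajectories tending to infinity at +-infinity
  (each finite set is visited only finitely often).\<close>
definition Wtraj :: "(int \<Rightarrow> 'd::finite pt) set" where
  "Wtraj = {w. (\<forall>t. w (t + 1) - w t \<in> unit_steps) \<and> (\<forall>A. finite A \<longrightarrow> finite {t. w t \<in> A})}"

definition shift_class :: "(int \<Rightarrow> 'd pt) \<Rightarrow> (int \<Rightarrow> 'd pt) set" where
  "shift_class w = {(\<lambda>t. w (t + k)) | k. True}"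

definition Wstar :: "(int \<Rightarrow> 'd::finite pt) set set" where
  "Wstar = shift_class ` Wtraj"

definition trange :: "(int \<Rightarrow> 'd pt) set \<Rightarrow> 'd pt set" where
  "trange c = (\<Union>w\<in>c. range w)"

definition entrance_rep :: "'d pt set \<Rightarrow> (int \<Rightarrow> 'd pt) set \<Rightarrow> (int \<Rightarrow> 'd pt)" where
  "entrance_rep A c = (THE w. w \<in> c \<and> w 0 \<in> A \<and> (\<forall>t<0. w t \<notin> A))"

definition fwd_part :: "(int \<Rightarrow> 'd pt) \<Rightarrow> (nat \<Rightarrow> 'd pt)" where
  "fwd_part w = (\<lambda>n. w (int n))"

definition bwd_part :: "(int \<Rightarrow> 'd pt) \<Rightarrow> (nat \<Rightarrow> 'd pt)" where
  "bwd_part w = (\<lambda>n. w (- int n))"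

text \<open>This is e_A(x) times (forward SRW) x (backward SRW conditioned on no return to A).\<close>
definition QA :: "'d::finite pt set \<Rightarrow> ((nat \<Rightarrow> 'd pt) \<times> (nat \<Rightarrow> 'd pt)) set \<Rightarrow> ennreal" where
  "QA A S = (\<Sum>x\<in>A. emeasure (srw x \<Otimes>\<^sub>M srw x) {(f, b) \<in> S. \<forall>t\<ge>1. b t \<notin> A})"

text \<open>A point configuration on W* is a multiplicity function W* -> nat.
  mu(B) = total mass of B.\<close>
definition pmass :: "((int \<Rightarrow> 'd pt) set \<Rightarrow> nat) \<Rightarrow> (int \<Rightarrow> 'd pt) set set \<Rightarrow> ennreal" where
  "pmass m B = (\<integral>\<^sup>+ c. ennreal (of_nat (m c)) \<partial>count_space B)"

definition Ncount :: "((int \<Rightarrow> 'd::finite pt) set \<Rightarrow> nat) \<Rightarrow> 'd pt set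
     \<Rightarrow> ((nat \<Rightarrow> 'd pt) \<times> (nat \<Rightarrow> 'd pt)) set \<Rightarrow> ennreal" where
  "Ncount m A S = pmass m {c \<in> Wstar. trange c \<inter> A \<noteq> {} \<and>
       (fwd_part (entrance_rep A c), bwd_part (entrance_rep A c)) \<in> S}"

text \<open>mu (a random configuration on the probability space M) is a random interlacement point
  process at level u, i.e. has law Pois(u,W*): it lives on W*, and for every finite A the
  trajectories hitting A (parametrized at first entrance) form a Poisson point process with
  intensity u Q_A: counts in disjoint measurable sets are independent and Poisson(u Q_A(S)).\<close>
definition interlacement_pp :: "real \<Rightarrow> 'w measure \<Rightarrow> ('w \<Rightarrow> (int \<Rightarrow> 'd::finite pt) set \<Rightarrow> nat) \<Rightarrow> bool" where
  "interlacement_pp u M mu \<longleftrightarrow>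
     prob_space M \<and>
     (\<forall>\<omega>\<in>space M. \<forall>c. c \<notin> Wstar \<longrightarrow> mu \<omega> c = 0) \<and>
     (\<forall>A. finite A \<longrightarrow>
        (\<forall>S \<in> sets (paths \<Otimes>\<^sub>M paths). \<forall>k::nat.
            measure M {\<omega> \<in> space M. Ncount (mu \<omega>) A S = of_nat k}
              = (u * enn2real (QA A S)) ^ k * exp (- (u * enn2real (QA A S))) / fact k) \<and>
        (\<forall>(J::nat set) S. finite J \<longrightarrow> disjoint_family_on S J \<longrightarrow>
            (\<forall>j\<in>J. S j \<in> sets (paths \<Otimes>\<^sub>M paths)) \<longrightarrow>
            prob_space.indep_vars M (\<lambda>_. borel) (\<lambda>j \<omega>. Ncount (mu \<omega>) A (S j)) J))"

definition supp :: "((int \<Rightarrow> 'd pt) set \<Rightarrow> nat) \<Rightarrow> (int \<Rightarrow> 'd pt) set set" where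
  "supp m = {c. m c > 0}"

definition interlacement_set :: "((int \<Rightarrow> 'd pt) set \<Rightarrow> nat) \<Rightarrow> 'd pt set" where
  "interlacement_set m = (\<Union>c\<in>supp m. trange c)"

definition G_adj :: "(int \<Rightarrow> 'd pt) set \<Rightarrow> (int \<Rightarrow> 'd pt) set \<Rightarrow> bool" where
  "G_adj v w \<longleftrightarrow> v \<noteq> w \<and> trange v \<inter> trange w \<noteq> {}"

text \<open>Graph distance in the graph with vertex set V and adjacency adj (infinity if no path).\<close>
definition graph_dist :: "('a \<Rightarrow> 'a \<Rightarrow> bool) \<Rightarrow> 'a set \<Rightarrow> 'a \<Rightarrow> 'a \<Rightarrow> enat" where
  "graph_dist adj V v w =
     (INF p \<in> {p. p \<noteq> [] \<and> hd p = v \<and> last p = w \<and> set p \<subseteq> V \<and>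
                 (\<forall>i < length p - 1. adj (p ! i) (p ! (i + 1)))}. enat (length p - 1))"

definition S_both :: "'d::finite pt \<Rightarrow> 'd pt \<Rightarrow> (int \<Rightarrow> 'd pt) set set" where
  "S_both x y = {c \<in> Wstar. x \<in> trange c \<and> y \<in> trange c}"

end

theory Submission
  imports Defs "HOL-Library.Nat_Bijection"
begin

(*
  Proof idea (a van den Berg--Kesten type bound for Poisson processes).
  On the event E with x, y in the interlacement set, pick trajectories v, w of the support
  through x and y; they are joined in G by a path of at most s_d - 1 edges, which we may take
  without repeated vertices: q_0 = v, ..., q_n = w, with n <= s_d - 1.  Choosing points
  z_i in range q_{i-1} and range q_i gives a chain z_0 = x, ..., z_{n+1} = y such that the
  DISTINCT trajectories q_i each visit both z_i and z_{i+1}.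
  Fix z and put A = {z_0, ..., z_{n+1}}.  Each trajectory hitting A falls into exactly one
  cell, indexed by the set B of steps i for which it visits both z_i and z_{i+1}; the cell
  counts are independent Poisson variables.  Assigning to each q_i its cell T(i) (with i in
  T(i)), at least #{i. T(i) = B} trajectories lie in cell B, an event of probability at most
  lambda_B ^ #{i. T(i) = B}.  Summing over the patterns T turns the product of the
  lambda_{T(i)} into the product over i of the sum of lambda_B over cells B containing i,
  and that sum is at most the expected number of trajectories visiting z_i and z_{i+1}.
  A union bound over n and z then gives the theorem.
*)

section \<open>Trajectories and their first-entrance parametrization\<close>

definition pair_range :: "(nat \<Rightarrow> 'd pt) \<times> (nat \<Rightarrow> 'd pt) \<Rightarrow> 'd pt set" where
  "pair_range p = range (fst p) \<union> range (snd p)"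

definition entrance_pair :: "'d pt set \<Rightarrow> (int \<Rightarrow> 'd pt) set \<Rightarrow> (nat \<Rightarrow> 'd pt) \<times> (nat \<Rightarrow> 'd pt)" where
  "entrance_pair A c = (fwd_part (entrance_rep A c), bwd_part (entrance_rep A c))"

lemma range_shift: "range (\<lambda>t. w (t + (k::int))) = range w"
proof
  show "range w \<subseteq> range (\<lambda>t. w (t + k))"
  proof
    fix a assume "a \<in> range w"
    then obtain t where "a = w ((t - k) + k)" by auto
    then show "a \<in> range (\<lambda>t. w (t + k))" by blast
  qed
qed auto

lemma trange_shift_class: "trange (shift_class w) = range w"
proof -
  have "(\<lambda>t. w (t + 0)) \<in> shift_class w" unfolding shift_class_def by blast
  then show ?thesis unfolding trange_def shift_class_def by (auto simp: range_shift)
qed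

lemma range_fwd_bwd: "range (fwd_part e) \<union> range (bwd_part e) = range e"
proof
  show "range e \<subseteq> range (fwd_part e) \<union> range (bwd_part e)"
  proof
    fix a assume "a \<in> range e"
    then obtain t where t: "a = e t" by auto
    show "a \<in> range (fwd_part e) \<union> range (bwd_part e)"
    proof (cases "t \<ge> 0")
      case True
      then have "a = fwd_part e (nat t)" using t by (simp add: fwd_part_def)
      then show ?thesis by blast
    next
      case False
      then have "a = bwd_part e (nat (-t))" using t by (simp add: bwd_part_def)
      then show ?thesis by blast
    qed
  qed
qed (auto simp: fwd_part_def bwd_part_def)

text \<open>A trajectory class hitting a finite set A has a unique representative entering A
  at time 0; since W consists of transient trajectories the entrance time exists.\<close>
lemma entrance_rep_in:
  assumes c: "c \<in> Wstar" and A: "finite A" and hit: "trange c \<inter> A \<noteq> {}"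
  shows "entrance_rep A c \<in> c" "trange c = range (entrance_rep A c)"
proof -
  obtain w where w: "w \<in> Wtraj" and cw: "c = shift_class w"
    using c unfolding Wstar_def by blast
  have fin: "finite {t. w t \<in> A}" using w A by (auto simp: Wtraj_def)
  have ne: "{t. w t \<in> A} \<noteq> {}" using hit by (auto simp: cw trange_shift_class)
  define t0 where "t0 = Min {t. w t \<in> A}"
  have t0A: "w t0 \<in> A" using Min_in[OF fin ne] by (simp add: t0_def)
  have t0min: "\<And>t. w t \<in> A \<Longrightarrow> t0 \<le> t" using Min_le[OF fin] by (simp add: t0_def)
  have ex: "\<exists>!w'. w' \<in> c \<and> w' 0 \<in> A \<and> (\<forall>t<0. w' t \<notin> A)"
  proof (rule ex1I[of _ "\<lambda>t. w (t + t0)"])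
    show "(\<lambda>t. w (t + t0)) \<in> c \<and> (\<lambda>t. w (t + t0)) 0 \<in> A \<and> (\<forall>t<0. (\<lambda>t. w (t + t0)) t \<notin> A)"
      using t0A t0min[of "_ + t0"] unfolding cw shift_class_def by force
  next
    fix w' assume h: "w' \<in> c \<and> w' 0 \<in> A \<and> (\<forall>t<0. w' t \<notin> A)"
    then obtain k where k: "w' = (\<lambda>t. w (t + k))" by (auto simp: cw shift_class_def)
    have "t0 \<le> k" using h k t0min by simp
    moreover have "\<not> t0 < k"
      using h k t0A by (metis diff_add_cancel diff_less_0_iff_less)
    ultimately show "w' = (\<lambda>t. w (t + t0))" using k by simp
  qed
  show e: "entrance_rep A c \<in> c"
    unfolding entrance_rep_def using theI'[OF ex] by blast
  then obtain k where "entrance_rep A c = (\<lambda>t. w (t + k))" by (auto simp: cw shift_class_def)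
  then show "trange c = range (entrance_rep A c)"
    using range_shift[of w k] trange_shift_class[of w] cw by simp
qed

lemma pair_range_entrance_pair:
  assumes "c \<in> Wstar" "finite A" "trange c \<inter> A \<noteq> {}"
  shows "pair_range (entrance_pair A c) = trange c"
  using entrance_rep_in(2)[OF assms] range_fwd_bwd
  by (simp add: pair_range_def entrance_pair_def)

section \<open>Paths in a graph\<close>

fun walk :: "('a \<Rightarrow> 'a \<Rightarrow> bool) \<Rightarrow> 'a list \<Rightarrow> bool" where
  "walk r [] = True"
| "walk r [a] = True"
| "walk r (a # b # xs) = (r a b \<and> walk r (b # xs))"

lemma walk_nth: "walk r p \<longleftrightarrow> (\<forall>i < length p - 1. r (p ! i) (p ! (i + 1)))"
proof (induction r p rule: walk.induct)
  case (3 r a b xs)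
  have "(\<forall>i < length (a # b # xs) - 1. r ((a # b # xs) ! i) ((a # b # xs) ! (i + 1)))
        \<longleftrightarrow> (\<forall>i < Suc (length xs). r ((a # b # xs) ! i) ((a # b # xs) ! (i + 1)))" by simp
  also have "\<dots> \<longleftrightarrow> r a b \<and> (\<forall>i < length xs. r ((b # xs) ! i) ((b # xs) ! (i + 1)))"
    unfolding All_less_Suc2 by simp
  finally show ?case using 3 by simp
qed auto

lemma walk_append: "walk r (xs @ [a] @ ys) \<longleftrightarrow> walk r (xs @ [a]) \<and> walk r (a # ys)"
proof (induction xs)
  case (Cons b xs)
  then show ?case by (cases xs) auto
qed simp

text \<open>Cutting out the loop between two visits of the same vertex: every walk can be shortened
  to a walk without repeated vertices with the same endpoints.\<close>
lemma walk_distinct: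
  assumes "walk r p" "p \<noteq> []"
  shows "\<exists>q. distinct q \<and> walk r q \<and> q \<noteq> [] \<and> hd q = hd p \<and> last q = last p \<and>
             set q \<subseteq> set p \<and> length q \<le> length p"
  using assms
proof (induction "length p" arbitrary: p rule: less_induct)
  case less
  show ?case
  proof (cases "distinct p")
    case True then show ?thesis using less.prems by blast
  next
    case False
    then obtain xs a ys zs where p: "p = xs @ [a] @ ys @ [a] @ zs"
      using not_distinct_decomp by blast
    define q where "q = xs @ [a] @ zs"
    have w1: "walk r (xs @ [a])" and "walk r (a # ys @ [a] @ zs)"
      using less.prems(1) unfolding p walk_append by auto
    then have "walk r ((a # ys) @ [a] @ zs)" by simp
    then have "walk r (a # zs)" unfolding walk_append by simp
    with w1 have wq: "walk r q" unfolding q_def walk_append by simp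
    have "length q < length p" "hd q = hd p" "last q = last p" "set q \<subseteq> set p" "q \<noteq> []"
      unfolding p q_def by (cases xs; cases zs; auto)+
    with less.hyps[OF _ wq] show ?thesis by (metis dual_order.trans less_imp_le_nat)
  qed
qed

lemma graph_dist_path:
  assumes "graph_dist adj V v w \<le> enat k"
  shows "\<exists>q. distinct q \<and> walk adj q \<and> q \<noteq> [] \<and> hd q = v \<and> last q = w \<and>
             set q \<subseteq> V \<and> length q \<le> Suc k"
proof -
  define Ps where "Ps = {p. p \<noteq> [] \<and> hd p = v \<and> last p = w \<and> set p \<subseteq> V \<and>
                 (\<forall>i < length p - 1. adj (p ! i) (p ! (i + 1)))}"
  have "(INF p\<in>Ps. enat (length p - 1)) < enat (Suc k)"
    using assms unfolding graph_dist_def Ps_def by (simp add: le_less_trans)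
  then obtain p where p: "p \<in> Ps" "length p - 1 < Suc k"
    unfolding INF_less_iff by auto
  then have "walk adj p" "p \<noteq> []" unfolding Ps_def walk_nth by blast+
  from walk_distinct[OF this] obtain q where q: "distinct q \<and> walk adj q \<and> q \<noteq> [] \<and>
      hd q = hd p \<and> last q = last p \<and> set q \<subseteq> set p \<and> length q \<le> length p" by blast
  show ?thesis using q p unfolding Ps_def by (intro exI[of _ q]) auto
qed

section \<open>Poisson estimates\<close>

definition pois :: "real \<Rightarrow> nat \<Rightarrow> real" where
  "pois l k = l ^ k * exp (- l) / fact k"

lemma pois_nonneg: "l \<ge> 0 \<Longrightarrow> pois l k \<ge> 0"
  by (simp add: pois_def)

lemma exp_sums_real: "(\<lambda>n. l ^ n / fact n) sums exp (l::real)"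
  using exp_converges[of l] by (simp add: divide_inverse mult.commute)

text \<open>Tail bound: a Poisson(l) variable is at least k with probability at most l^k,
  since the tail series is dominated termwise by l^k times the exponential series.\<close>
lemma pois_tail:
  assumes l: "l \<ge> 0"
  shows "1 - (\<Sum>j<k. pois l j) \<le> l ^ k"
proof -
  define f where "f n = l ^ n / fact n" for n
  have fs: "f sums exp l" unfolding f_def by (rule exp_sums_real)
  have tail: "(\<lambda>n. f (n + k)) sums (exp l - (\<Sum>j<k. f j))"
    using sums_split_initial_segment[OF fs, of k] by simp
  have dom: "(\<lambda>n. l ^ k * f n) sums (l ^ k * exp l)" by (rule sums_mult[OF fs])
  have "f (n + k) \<le> l ^ k * f n" for n
  proof -
    have "fact n \<le> (fact (n + k) :: real)" by (rule fact_mono) simp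
    then have "l ^ (n + k) / fact (n + k) \<le> l ^ (n + k) / fact n"
      using l by (intro divide_left_mono) auto
    then show ?thesis by (simp add: f_def power_add field_simps)
  qed
  then have "exp l - (\<Sum>j<k. f j) \<le> l ^ k * exp l" by (rule sums_le[OF _ tail dom])
  then have "exp (-l) * (exp l - (\<Sum>j<k. f j)) \<le> exp (-l) * (l ^ k * exp l)"
    by (intro mult_left_mono) auto
  then show ?thesis
    by (simp add: pois_def f_def sum_distrib_left right_diff_distrib exp_minus field_simps)
qed

lemma pois_mean: "(\<lambda>k. real k * pois l k) sums l"
proof -
  have "(\<lambda>m. l * exp (-l) * (l ^ m / fact m)) sums (l * exp (-l) * exp l)"
    by (rule sums_mult[OF exp_sums_real])
  moreover have "l * exp (-l) * exp l = l" by (simp add: exp_minus)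
  moreover have "l * exp (-l) * (l ^ m / fact m) = real (Suc m) * pois l (Suc m)" for m
    unfolding pois_def fact_Suc of_nat_mult by (simp add: field_simps del: of_nat_Suc)
  ultimately have "(\<lambda>m. real (Suc m) * pois l (Suc m)) sums l" by simp
  then show ?thesis using sums_Suc_iff[of "\<lambda>k. real k * pois l k" l] by simp
qed

context prob_space
begin

lemma pois_ge:
  fixes N :: "'a \<Rightarrow> ennreal"
  assumes N: "N \<in> borel_measurable M" and l: "l \<ge> 0"
    and P: "\<And>k. measure M {\<omega> \<in> space M. N \<omega> = of_nat k} = pois l k"
  shows "prob {\<omega> \<in> space M. N \<omega> \<ge> of_nat k} \<le> l ^ k"
proof -
  define U where "U = (\<Union>j\<in>{..<k}. {\<omega> \<in> space M. N \<omega> = of_nat j})"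
  have ev: "\<And>j. {\<omega> \<in> space M. N \<omega> = of_nat j} \<in> events" using N by measurable
  have Uev: "U \<in> events" unfolding U_def using ev by auto
  have "{\<omega> \<in> space M. N \<omega> \<ge> of_nat k} \<subseteq> space M - U"
    unfolding U_def by (auto simp: not_le[symmetric])
  then have "prob {\<omega> \<in> space M. N \<omega> \<ge> of_nat k} \<le> prob (space M - U)"
    using Uev by (intro finite_measure_mono) auto
  also have "\<dots> = 1 - prob U" using Uev by (rule prob_compl)
  also have "prob U = (\<Sum>j<k. pois l j)"
    unfolding U_def using P
    by (subst finite_measure_finite_Union) (auto simp: disjoint_family_on_def ev)
  finally show ?thesis using pois_tail[OF l, of k] by linarith
qed

lemma pois_mean_ge:
  fixes N :: "'a \<Rightarrow> ennreal"
  assumes N: "N \<in> borel_measurable M" and l: "l \<ge> 0"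
    and P: "\<And>k. measure M {\<omega> \<in> space M. N \<omega> = of_nat k} = pois l k"
  shows "ennreal l \<le> (\<integral>\<^sup>+\<omega>. N \<omega> \<partial>M)"
proof -
  define lev where "lev k = {\<omega> \<in> space M. N \<omega> = of_nat k}" for k
  have ev: "\<And>k. lev k \<in> events" unfolding lev_def using N by measurable
  have "(\<lambda>k. ennreal (real k * pois l k)) sums ennreal l"
    using pois_mean[of l] l pois_nonneg[OF l] by (subst sums_ennreal) auto
  then have "ennreal l = (\<Sum>k. ennreal (real k * pois l k))" by (rule sums_unique)
  also have "\<dots> = (\<Sum>k. of_nat k * emeasure M (lev k))"
    using P pois_nonneg[OF l]
    by (simp add: lev_def emeasure_eq_measure ennreal_mult ennreal_of_nat_eq_real_of_nat)
  also have "\<dots> = (\<integral>\<^sup>+\<omega>. (\<Sum>k. of_nat k * indicator (lev k) \<omega>) \<partial>M)"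
    using ev by (simp add: nn_integral_suminf nn_integral_cmult_indicator)
  also have "\<dots> \<le> (\<integral>\<^sup>+\<omega>. N \<omega> \<partial>M)"
  proof (intro nn_integral_mono)
    fix \<omega> assume \<omega>: "\<omega> \<in> space M"
    show "(\<Sum>k. of_nat k * indicator (lev k) \<omega>) \<le> N \<omega>"
    proof (cases "\<exists>k0. N \<omega> = of_nat k0")
      case True
      then obtain k0 where k0: "N \<omega> = of_nat k0" by blast
      have "(\<Sum>k. of_nat k * indicator (lev k) \<omega>) = (\<Sum>k\<in>{k0}. of_nat k * indicator (lev k) \<omega> :: ennreal)"
        using k0 by (intro suminf_finite) (auto simp: lev_def)
      then show ?thesis using k0 \<omega> by (simp add: lev_def)
    next
      case False
      then show ?thesis by (simp add: lev_def)
    qed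
  qed
  finally show ?thesis .
qed

end

section \<open>Masses of point configurations\<close>

lemma pmass_indicator: "pmass m X = (\<integral>\<^sup>+c. ennreal (of_nat (m c)) * indicator X c \<partial>count_space UNIV)"
  unfolding pmass_def by (rule nn_integral_count_space_indicator) simp

lemma pmass_disjoint_UN:
  assumes "finite F" "disjoint_family_on X F"
  shows "pmass m (\<Union>B\<in>F. X B) = (\<Sum>B\<in>F. pmass m (X B))"
proof -
  have "pmass m (\<Union>B\<in>F. X B) = (\<integral>\<^sup>+c. (\<Sum>B\<in>F. ennreal (of_nat (m c)) * indicator (X B) c) \<partial>count_space UNIV)"
    unfolding pmass_indicator indicator_UN_disjoint[OF assms] by (simp add: sum_distrib_left)
  also have "\<dots> = (\<Sum>B\<in>F. pmass m (X B))"
    unfolding pmass_indicator by (rule nn_integral_sum) simp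
  finally show ?thesis .
qed

lemma pmass_ge_card:
  assumes "finite F" "F \<subseteq> X" "\<And>c. c \<in> F \<Longrightarrow> m c > 0"
  shows "of_nat (card F) \<le> pmass m X"
proof -
  have "of_nat (card F) = (\<Sum>c\<in>F. (1::ennreal))" by simp
  also have "\<dots> \<le> (\<Sum>c\<in>F. ennreal (of_nat (m c)))"
    using assms(3) by (intro sum_mono) (simp add: Suc_le_eq)
  also have "\<dots> = pmass m F"
    unfolding pmass_def by (rule nn_integral_count_space_finite[symmetric, OF assms(1)])
  also have "\<dots> \<le> pmass m X" unfolding pmass_indicator
    using assms(2) by (intro nn_integral_mono mult_left_mono) (auto simp: indicator_def)
  finally show ?thesis .
qed

section \<open>The cell decomposition along a chain of points\<close>

definition step_cover :: "'d::finite pt list \<Rightarrow> nat \<Rightarrow> ((nat \<Rightarrow> 'd pt) \<times> (nat \<Rightarrow> 'd pt)) set" where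
  "step_cover z i = {p. z ! i \<in> pair_range p \<and> z ! Suc i \<in> pair_range p}"

definition cell :: "'d::finite pt list \<Rightarrow> nat \<Rightarrow> nat set \<Rightarrow> ((nat \<Rightarrow> 'd pt) \<times> (nat \<Rightarrow> 'd pt)) set" where
  "cell z n B = {p. \<forall>i\<in>{..n}. p \<in> step_cover z i \<longleftrightarrow> i \<in> B}"

definition cell_traj :: "'d::finite pt list \<Rightarrow> nat \<Rightarrow> nat set \<Rightarrow> (int \<Rightarrow> 'd pt) set set" where
  "cell_traj z n B = {c \<in> Wstar. trange c \<inter> set z \<noteq> {} \<and> entrance_pair (set z) c \<in> cell z n B}"

lemma Ncount_cell: "Ncount m (set z) (cell z n B) = pmass m (cell_traj z n B)"
  unfolding Ncount_def cell_traj_def entrance_pair_def by simp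

lemma space_paths_pair: "space (paths \<Otimes>\<^sub>M paths) = UNIV"
  by (simp add: space_pair_measure paths_def space_PiM)

lemma pair_range_iff: "a \<in> pair_range p \<longleftrightarrow> (\<exists>t. fst p t = a \<or> snd p t = a)"
  unfolding pair_range_def by blast

lemma step_cover_sets: "step_cover z i \<in> sets (paths \<Otimes>\<^sub>M paths)"
proof -
  have "step_cover z i = {p \<in> space (paths \<Otimes>\<^sub>M paths).
      (\<exists>t. fst p t = z ! i \<or> snd p t = z ! i) \<and> (\<exists>t. fst p t = z ! Suc i \<or> snd p t = z ! Suc i)}"
    unfolding space_paths_pair step_cover_def pair_range_iff by simp
  also have "\<dots> \<in> sets (paths \<Otimes>\<^sub>M paths)"
    unfolding paths_def by measurable
  finally show ?thesis .
qed

lemma cell_sets: "cell z n B \<in> sets (paths \<Otimes>\<^sub>M paths)"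
proof -
  have "cell z n B = space (paths \<Otimes>\<^sub>M paths) \<inter>
     (\<Inter>i\<in>{..n}. if i \<in> B then step_cover z i else space (paths \<Otimes>\<^sub>M paths) - step_cover z i)"
    unfolding space_paths_pair cell_def by auto
  also have "\<dots> \<in> sets (paths \<Otimes>\<^sub>M paths)"
    using step_cover_sets by (intro sets.Int sets.top sets.finite_INT) auto
  finally show ?thesis .
qed

lemma cell_iff: "B \<subseteq> {..n} \<Longrightarrow> p \<in> cell z n B \<longleftrightarrow> B = {j\<in>{..n}. p \<in> step_cover z j}"
  unfolding cell_def by auto

lemma cell_disjoint:
  assumes "B1 \<subseteq> {..n}" "B2 \<subseteq> {..n}" "B1 \<noteq> B2"
  shows "cell z n B1 \<inter> cell z n B2 = {}"
proof -
  have "p \<notin> cell z n B1 \<inter> cell z n B2" for p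
    using assms cell_iff[of B1 n p z] cell_iff[of B2 n p z] by auto
  then show ?thesis by blast
qed

lemma finite_cells_containing: "finite {B. B \<subseteq> {..n::nat} \<and> i \<in> B}"
  by (rule finite_subset[of _ "Pow {..n}"]) auto

lemma S_both_cells:
  assumes i: "i \<le> n" and len: "length z = Suc (Suc n)"
  shows "S_both (z ! i) (z ! Suc i) = (\<Union>B\<in>{B. B \<subseteq> {..n} \<and> i \<in> B}. cell_traj z n B)"
proof (intro equalityI subsetI)
  fix c assume c: "c \<in> S_both (z ! i) (z ! Suc i)"
  then have cW: "c \<in> Wstar" and ci: "z ! i \<in> trange c" "z ! Suc i \<in> trange c"
    unfolding S_both_def by blast+
  have "z ! i \<in> set z" using i len by simp
  then have hit: "trange c \<inter> set z \<noteq> {}" using ci by blast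
  define B where "B = {j\<in>{..n}. entrance_pair (set z) c \<in> step_cover z j}"
  have "entrance_pair (set z) c \<in> step_cover z i"
    unfolding step_cover_def using ci pair_range_entrance_pair[OF cW _ hit] by simp
  then have "B \<subseteq> {..n}" "i \<in> B" using i unfolding B_def by auto
  moreover have "c \<in> cell_traj z n B"
    using cell_iff[of B n] cW hit unfolding cell_traj_def B_def by blast
  ultimately show "c \<in> (\<Union>B\<in>{B. B \<subseteq> {..n} \<and> i \<in> B}. cell_traj z n B)" by blast
next
  fix c assume "c \<in> (\<Union>B\<in>{B. B \<subseteq> {..n} \<and> i \<in> B}. cell_traj z n B)"
  then obtain B where B: "B \<subseteq> {..n}" "i \<in> B" and cW: "c \<in> Wstar"
    and hit: "trange c \<inter> set z \<noteq> {}" and k: "entrance_pair (set z) c \<in> cell z n B"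
    unfolding cell_traj_def by blast
  have "entrance_pair (set z) c \<in> step_cover z i" using k B i unfolding cell_def by blast
  then show "c \<in> S_both (z ! i) (z ! Suc i)"
    using cW pair_range_entrance_pair[OF cW _ hit] unfolding step_cover_def S_both_def by simp
qed

lemma pmass_S_both:
  assumes "i \<le> n" "length z = Suc (Suc n)"
  shows "pmass m (S_both (z ! i) (z ! Suc i)) =
           (\<Sum>B\<in>{B. B \<subseteq> {..n} \<and> i \<in> B}. Ncount m (set z) (cell z n B))"
  unfolding S_both_cells[OF assms] Ncount_cell
proof (rule pmass_disjoint_UN[OF finite_cells_containing])
  show "disjoint_family_on (cell_traj z n) {B. B \<subseteq> {..n} \<and> i \<in> B}"
  proof (unfold disjoint_family_on_def, intro ballI impI)
    fix B1 B2 assume "B1 \<in> {B. B \<subseteq> {..n} \<and> i \<in> B}" "B2 \<in> {B. B \<subseteq> {..n} \<and> i \<in> B}" "B1 \<noteq> B2"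
    then have "cell z n B1 \<inter> cell z n B2 = {}" by (intro cell_disjoint) auto
    then show "cell_traj z n B1 \<inter> cell_traj z n B2 = {}" unfolding cell_traj_def by blast
  qed
qed

section \<open>The probability of a chain of distinct trajectories\<close>

definition patterns :: "nat \<Rightarrow> (nat \<Rightarrow> nat set) set" where
  "patterns n = PiE {..n} (\<lambda>i. {B. B \<subseteq> {..n} \<and> i \<in> B})"

definition pattern_mult :: "nat \<Rightarrow> (nat \<Rightarrow> nat set) \<Rightarrow> nat set \<Rightarrow> nat" where
  "pattern_mult n T B = card {i\<in>{..n}. T i = B}"

definition pattern_event :: "'w measure \<Rightarrow> ('w \<Rightarrow> (int \<Rightarrow> 'd::finite pt) set \<Rightarrow> nat) \<Rightarrow> 'd pt list
     \<Rightarrow> nat \<Rightarrow> (nat \<Rightarrow> nat set) \<Rightarrow> 'w set" where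
  "pattern_event M mu z n T = {\<omega> \<in> space M. \<forall>B \<in> Pow {..n}.
      of_nat (pattern_mult n T B) \<le> Ncount (mu \<omega>) (set z) (cell z n B)}"

text \<open>Some pattern is realized: this contains the event that distinct trajectories
  q_0, ..., q_n of the support exist with q_i visiting z_i and z_(i+1).\<close>
definition chain_event :: "'w measure \<Rightarrow> ('w \<Rightarrow> (int \<Rightarrow> 'd::finite pt) set \<Rightarrow> nat) \<Rightarrow> 'd pt list
     \<Rightarrow> nat \<Rightarrow> 'w set" where
  "chain_event M mu z n = (\<Union>T\<in>patterns n. pattern_event M mu z n T)"

definition cell_intensity :: "real \<Rightarrow> 'd::finite pt list \<Rightarrow> nat \<Rightarrow> nat set \<Rightarrow> real" where
  "cell_intensity u z n B = u * enn2real (QA (set z) (cell z n B))"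

lemma finite_patterns: "finite (patterns n)"
  unfolding patterns_def by (intro finite_PiE) (auto intro: finite_cells_containing)

lemma prod_pattern_mult:
  assumes T: "T \<in> patterns n"
  shows "(\<Prod>B\<in>Pow {..n}. (f B :: real) ^ pattern_mult n T B) = (\<Prod>i\<in>{..n}. f (T i))"
proof -
  have sub: "T ` {..n} \<subseteq> Pow {..n}" using T by (auto simp: patterns_def PiE_def Pi_def)
  have "(\<Prod>B\<in>Pow {..n}. f B ^ pattern_mult n T B) = (\<Prod>B\<in>Pow {..n}. \<Prod>i\<in>{x \<in> {..n}. T x = B}. f (T i))"
    by (intro prod.cong refl) (simp add: pattern_mult_def)
  also have "\<dots> = (\<Prod>i\<in>{..n}. f (T i))"
    by (rule prod.group[OF _ _ sub]) auto
  finally show ?thesis .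
qed

text \<open>The cells are indexed by the natural numbers set_encode B, as independence of the cell
  counts is only postulated for natural-number indexed families.\<close>
lemma pattern_event_INT:
  "pattern_event M mu z n T = (\<Inter>j\<in>set_encode ` Pow {..n}.
     (\<lambda>\<omega>. Ncount (mu \<omega>) (set z) (cell z n (set_decode j))) -` {of_nat (pattern_mult n T (set_decode j))..}
       \<inter> space M)"
proof -
  have "set_decode (set_encode B) = B" if "B \<in> Pow {..n}" for B
    using that by (simp add: finite_subset)
  moreover have "set_encode ` Pow {..n} \<noteq> {}" by blast
  ultimately show ?thesis unfolding pattern_event_def by auto
qed

context
  fixes u :: real and M :: "'w measure" and mu :: "'w \<Rightarrow> (int \<Rightarrow> 'd::finite pt) set \<Rightarrow> nat"
  assumes pp: "interlacement_pp u M mu" and u: "0 \<le> u"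
begin

lemma interlacement_prob_space: "prob_space M"
  using pp by (simp add: interlacement_pp_def)

lemma cell_intensity_nonneg: "0 \<le> cell_intensity u z n B"
  using u by (simp add: cell_intensity_def)

lemma cell_count_poisson:
  "measure M {\<omega> \<in> space M. Ncount (mu \<omega>) (set z) (cell z n B) = of_nat k} = pois (cell_intensity u z n B) k"
  using pp cell_sets unfolding interlacement_pp_def pois_def cell_intensity_def by blast

lemma interlacement_indep:
  fixes J :: "nat set"
  assumes "finite A" "finite J" "disjoint_family_on S J" "\<forall>j\<in>J. S j \<in> sets (paths \<Otimes>\<^sub>M paths)"
  shows "prob_space.indep_vars M (\<lambda>_. borel) (\<lambda>j \<omega>. Ncount (mu \<omega>) A (S j)) J"
  using pp assms unfolding interlacement_pp_def by blast

text \<open>Different cells are disjoint, so the counts in them are independent.\<close>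
lemma cell_counts_indep:
  "prob_space.indep_vars M (\<lambda>_. borel) (\<lambda>j \<omega>. Ncount (mu \<omega>) (set z) (cell z n (set_decode j)))
     (set_encode ` Pow {..n})"
proof -
  have "disjoint_family_on (\<lambda>j. cell z n (set_decode j)) (set_encode ` Pow {..n})"
  proof (unfold disjoint_family_on_def, intro ballI impI)
    fix j1 j2 assume "j1 \<in> set_encode ` Pow {..n}" "j2 \<in> set_encode ` Pow {..n}" "j1 \<noteq> j2"
    then obtain B1 B2 where "B1 \<subseteq> {..n}" "B2 \<subseteq> {..n}" "j1 = set_encode B1" "j2 = set_encode B2"
      "B1 \<noteq> B2" by blast
    then show "cell z n (set_decode j1) \<inter> cell z n (set_decode j2) = {}"
      using cell_disjoint[of B1 n B2 z] by (simp add: finite_subset)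
  qed
  then show ?thesis by (intro interlacement_indep) (auto simp: cell_sets)
qed

lemma cell_count_measurable:
  assumes "B \<subseteq> {..n}"
  shows "(\<lambda>\<omega>. Ncount (mu \<omega>) (set z) (cell z n B)) \<in> borel_measurable M"
proof -
  have "set_encode B \<in> set_encode ` Pow {..n}" using assms by blast
  then show ?thesis
    using cell_counts_indep[of z n] assms unfolding prob_space.indep_vars_def[OF interlacement_prob_space]
    by (auto simp: finite_subset)
qed

lemma pattern_event_sets: "pattern_event M mu z n T \<in> sets M"
  unfolding pattern_event_INT using cell_counts_indep[of z n]
  unfolding prob_space.indep_vars_def[OF interlacement_prob_space]
  by (intro sets.finite_INT measurable_sets[of _ M borel]) (auto intro: borel_closed)

lemma chain_event_sets: "chain_event M mu z n \<in> sets M"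
  unfolding chain_event_def using pattern_event_sets finite_patterns by (intro sets.finite_UN) auto

text \<open>By independence and the Poisson tail bound, a pattern T is realized with probability at
  most the product of the intensities of the cells T(i).\<close>
lemma prob_pattern_event:
  assumes T: "T \<in> patterns n"
  shows "measure M (pattern_event M mu z n T) \<le> (\<Prod>i\<in>{..n}. cell_intensity u z n (T i))"
proof -
  interpret prob_space M by (rule interlacement_prob_space)
  define N where "N B \<omega> = Ncount (mu \<omega>) (set z) (cell z n B)" for B \<omega>
  have "prob (pattern_event M mu z n T) =
      (\<Prod>j\<in>set_encode ` Pow {..n}. prob ((\<lambda>\<omega>. N (set_decode j) \<omega>) -` {of_nat (pattern_mult n T (set_decode j))..} \<inter> space M))"
    unfolding pattern_event_INT N_def
    by (rule indep_varsD[OF cell_counts_indep]) (auto intro: borel_closed)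
  also have "\<dots> = (\<Prod>B\<in>Pow {..n}. prob {\<omega> \<in> space M. N B \<omega> \<ge> of_nat (pattern_mult n T B)})"
    by (subst prod.reindex)
       (auto intro!: prod.cong arg_cong[where f=prob] inj_on_subset[OF inj_on_set_encode] simp: finite_subset)
  also have "\<dots> \<le> (\<Prod>B\<in>Pow {..n}. cell_intensity u z n B ^ pattern_mult n T B)"
    using pois_ge[OF cell_count_measurable cell_intensity_nonneg cell_count_poisson]
    by (intro prod_mono) (auto simp: N_def)
  also have "\<dots> = (\<Prod>i\<in>{..n}. cell_intensity u z n (T i))" by (rule prod_pattern_mult[OF T])
  finally show ?thesis .
qed

lemma cell_intensity_sum_le:
  assumes i: "i \<le> n" and len: "length z = Suc (Suc n)"
  shows "ennreal (\<Sum>B\<in>{B. B \<subseteq> {..n} \<and> i \<in> B}. cell_intensity u z n B)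
           \<le> (\<integral>\<^sup>+\<omega>. pmass (mu \<omega>) (S_both (z ! i) (z ! Suc i)) \<partial>M)"
proof -
  interpret prob_space M by (rule interlacement_prob_space)
  let ?F = "{B. B \<subseteq> {..n} \<and> i \<in> B}"
  have "ennreal (\<Sum>B\<in>?F. cell_intensity u z n B) = (\<Sum>B\<in>?F. ennreal (cell_intensity u z n B))"
    using cell_intensity_nonneg by (intro sum_ennreal[symmetric]) simp
  also have "\<dots> \<le> (\<Sum>B\<in>?F. \<integral>\<^sup>+\<omega>. Ncount (mu \<omega>) (set z) (cell z n B) \<partial>M)"
    by (intro sum_mono pois_mean_ge[OF cell_count_measurable cell_intensity_nonneg cell_count_poisson])
       auto
  also have "\<dots> = (\<integral>\<^sup>+\<omega>. (\<Sum>B\<in>?F. Ncount (mu \<omega>) (set z) (cell z n B)) \<partial>M)"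
    using cell_count_measurable by (intro nn_integral_sum[symmetric]) auto
  also have "\<dots> = (\<integral>\<^sup>+\<omega>. pmass (mu \<omega>) (S_both (z ! i) (z ! Suc i)) \<partial>M)"
    using pmass_S_both[OF i len] by simp
  finally show ?thesis .
qed

text \<open>The probability bound for a fixed chain z: a union bound over the patterns, after which
  the sum over patterns of products factorizes into a product of sums.\<close>
lemma chain_event_bound:
  assumes len: "length z = Suc (Suc n)"
  shows "emeasure M (chain_event M mu z n) \<le>
           (\<Prod>i\<in>{0..n}. \<integral>\<^sup>+\<omega>. pmass (mu \<omega>) (S_both (z ! i) (z ! (i + 1))) \<partial>M)"
proof -
  interpret prob_space M by (rule interlacement_prob_space)
  let ?lam = "cell_intensity u z n"
  have "emeasure M (chain_event M mu z n) \<le> (\<Sum>T\<in>patterns n. emeasure M (pattern_event M mu z n T))"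
    unfolding chain_event_def using pattern_event_sets finite_patterns
    by (intro emeasure_subadditive_finite) auto
  also have "\<dots> \<le> (\<Sum>T\<in>patterns n. ennreal (\<Prod>i\<in>{..n}. ?lam (T i)))"
    using prob_pattern_event by (intro sum_mono) (simp add: emeasure_eq_measure ennreal_leI)
  also have "\<dots> = ennreal (\<Prod>i\<in>{..n}. \<Sum>B\<in>{B. B \<subseteq> {..n} \<and> i \<in> B}. ?lam B)"
    using cell_intensity_nonneg
    by (subst sum_ennreal) (auto intro!: prod_nonneg simp: patterns_def prod_sum_PiE finite_cells_containing)
  also have "\<dots> = (\<Prod>i\<in>{..n}. ennreal (\<Sum>B\<in>{B. B \<subseteq> {..n} \<and> i \<in> B}. ?lam B))"
    using cell_intensity_nonneg by (intro prod_ennreal[symmetric] sum_nonneg)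
  also have "\<dots> \<le> (\<Prod>i\<in>{..n}. \<integral>\<^sup>+\<omega>. pmass (mu \<omega>) (S_both (z ! i) (z ! Suc i)) \<partial>M)"
    using cell_intensity_sum_le len by (intro prod_mono_ennreal) auto
  finally show ?thesis by (simp add: atLeast0AtMost)
qed

end

section \<open>Covering the event by chain events\<close>

lemma chain_points:
  assumes x: "x \<in> f 0" and y: "y \<in> f n" and overlap: "\<And>i. i < n \<Longrightarrow> f i \<inter> f (Suc i) \<noteq> {}"
  shows "\<exists>zs. length zs = n \<and> (\<forall>i\<le>n. (x # zs @ [y]) ! i \<in> f i \<and> (x # zs @ [y]) ! Suc i \<in> f i)"
proof -
  define zs where "zs = map (\<lambda>i. SOME a. a \<in> f i \<inter> f (Suc i)) [0..<n]"
  have len: "length zs = n" unfolding zs_def by simp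
  have zs: "zs ! i \<in> f i \<inter> f (Suc i)" if "i < n" for i
    using someI_ex[of "\<lambda>a. a \<in> f i \<inter> f (Suc i)"] overlap[OF that] that by (auto simp: zs_def)
  have "(x # zs @ [y]) ! i \<in> f i" if "i \<le> n" for i
    using that x zs len by (cases i) (auto simp: nth_append)
  moreover have "(x # zs @ [y]) ! Suc i \<in> f i" if "i \<le> n" for i
    using that y zs len by (cases "i < n") (auto simp: nth_append)
  ultimately show ?thesis using len by blast
qed

text \<open>Distinct trajectories q_0, ..., q_n of the support, q_i visiting z_i and z_(i+1), realize
  the pattern assigning to i the cell of q_i.\<close>
lemma distinct_chain_in_chain_event:
  assumes sp: "\<omega> \<in> space M" and W: "\<forall>c. c \<notin> Wstar \<longrightarrow> mu \<omega> c = 0"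
    and q: "distinct q" "length q = Suc n" "set q \<subseteq> supp (mu \<omega>)"
    and len: "length z = Suc (Suc n)"
    and z: "\<And>i. i \<le> n \<Longrightarrow> z ! i \<in> trange (q ! i) \<and> z ! Suc i \<in> trange (q ! i)"
  shows "\<omega> \<in> chain_event M mu z n"
proof -
  have qsupp: "q ! i \<in> Wstar" "mu \<omega> (q ! i) > 0" if "i \<le> n" for i
  proof -
    have "q ! i \<in> set q" using q(2) that by simp
    then have "q ! i \<in> supp (mu \<omega>)" using q(3) by blast
    then show "mu \<omega> (q ! i) > 0" "q ! i \<in> Wstar" using W by (auto simp: supp_def)
  qed
  have qhit: "trange (q ! i) \<inter> set z \<noteq> {}" if "i \<le> n" for i
  proof -
    have "z ! i \<in> set z" using that len by simp
    then show ?thesis using z[OF that] by blast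
  qed
  define T where "T = (\<lambda>i\<in>{..n}. {j\<in>{..n}. entrance_pair (set z) (q ! i) \<in> step_cover z j})"
  have cell_q: "q ! i \<in> cell_traj z n (T i)" if "i \<le> n" for i
    using that qsupp qhit cell_iff[of "T i" n "entrance_pair (set z) (q ! i)" z]
    unfolding cell_traj_def T_def by auto
  have "T \<in> patterns n"
    unfolding patterns_def
  proof (rule PiE_I)
    fix i assume i: "i \<in> {..n}"
    then have "entrance_pair (set z) (q ! i) \<in> step_cover z i"
      using z pair_range_entrance_pair[OF qsupp(1) _ qhit] unfolding step_cover_def by simp
    then show "T i \<in> {B. B \<subseteq> {..n} \<and> i \<in> B}" using i by (auto simp: T_def)
  qed (simp add: T_def)
  moreover have "\<omega> \<in> pattern_event M mu z n T"
    unfolding pattern_event_def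
  proof (intro CollectI conjI ballI sp)
    fix B assume B: "B \<in> Pow {..n}"
    define F where "F = (\<lambda>i. q ! i) ` {i\<in>{..n}. T i = B}"
    have "pattern_mult n T B = card F"
      unfolding F_def pattern_mult_def using q
      by (intro card_image[symmetric] inj_on_nth) auto
    also have "of_nat (card F) \<le> pmass (mu \<omega>) (cell_traj z n B)"
      using cell_q qsupp by (intro pmass_ge_card) (auto simp: F_def)
    finally show "of_nat (pattern_mult n T B) \<le> Ncount (mu \<omega>) (set z) (cell z n B)"
      unfolding Ncount_cell by simp
  qed
  ultimately show ?thesis unfolding chain_event_def by blast
qed

lemma connected_in_chain_event:
  assumes sp: "\<omega> \<in> space M" and W: "\<forall>c. c \<notin> Wstar \<longrightarrow> mu \<omega> c = 0"
    and hx: "x \<in> interlacement_set (mu \<omega>)" and hy: "y \<in> interlacement_set (mu \<omega>)"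
    and hd: "\<forall>v\<in>supp (mu \<omega>). \<forall>w\<in>supp (mu \<omega>). graph_dist G_adj (supp (mu \<omega>)) v w \<le> enat k"
  shows "\<exists>n zs. n \<le> k \<and> length zs = n \<and> \<omega> \<in> chain_event M mu (x # zs @ [y]) n"
proof -
  obtain v where v: "v \<in> supp (mu \<omega>)" "x \<in> trange v" using hx unfolding interlacement_set_def by blast
  obtain w where w: "w \<in> supp (mu \<omega>)" "y \<in> trange w" using hy unfolding interlacement_set_def by blast
  obtain q where q: "distinct q" "walk G_adj q" "q \<noteq> []" "hd q = v" "last q = w"
      "set q \<subseteq> supp (mu \<omega>)" "length q \<le> Suc k"
    using graph_dist_path[OF hd[rule_format, OF v(1) w(1)]] by blast
  define n where "n = length q - 1"
  have lenq: "length q = Suc n" using q(3) unfolding n_def by (cases q) auto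
  have "x \<in> trange (q ! 0)" "y \<in> trange (q ! n)"
    using v w q(3-5) lenq by (auto simp: hd_conv_nth last_conv_nth)
  moreover have "trange (q ! i) \<inter> trange (q ! Suc i) \<noteq> {}" if "i < n" for i
    using q(2) lenq that unfolding walk_nth G_adj_def by auto
  ultimately obtain zs where zs: "length zs = n"
      "\<And>i. i \<le> n \<Longrightarrow> (x # zs @ [y]) ! i \<in> trange (q ! i) \<and> (x # zs @ [y]) ! Suc i \<in> trange (q ! i)"
    using chain_points[of x "\<lambda>i. trange (q ! i)" y n] by blast
  have "\<omega> \<in> chain_event M mu (x # zs @ [y]) n"
    using zs q lenq by (intro distinct_chain_in_chain_event[where mu = mu, OF sp W]) auto
  moreover have "n \<le> k" using q(7) lenq by simp
  ultimately show ?thesis using zs(1) by blast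
qed

lemma emeasure_UN_countable_le:
  assumes L: "countable L" and H: "\<And>l. l \<in> L \<Longrightarrow> H l \<in> sets M"
  shows "emeasure M (\<Union>l\<in>L. H l) \<le> (\<integral>\<^sup>+l. emeasure M (H l) \<partial>count_space L)"
proof -
  have "emeasure M (\<Union>l\<in>L. H l) = (\<integral>\<^sup>+\<omega>. indicator (\<Union>l\<in>L. H l) \<omega> \<partial>M)"
    using H L by (intro nn_integral_indicator[symmetric] sets.countable_UN'') auto
  also have "\<dots> \<le> (\<integral>\<^sup>+\<omega>. \<integral>\<^sup>+l. indicator (H l) \<omega> \<partial>count_space L \<partial>M)"
  proof (rule nn_integral_mono)
    fix \<omega>
    show "indicator (\<Union>l\<in>L. H l) \<omega> \<le> (\<integral>\<^sup>+l. indicator (H l) \<omega> \<partial>count_space L)"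
    proof (cases "\<omega> \<in> (\<Union>l\<in>L. H l)")
      case True
      then obtain l where l: "l \<in> L" "\<omega> \<in> H l" by blast
      have "indicator (\<Union>l\<in>L. H l) \<omega> = (\<integral>\<^sup>+l'. indicator (H l) \<omega> * indicator {l} l' \<partial>count_space L)"
        using True l by (subst nn_integral_cmult_indicator) auto
      also have "\<dots> \<le> (\<integral>\<^sup>+l. indicator (H l) \<omega> \<partial>count_space L)"
        by (intro nn_integral_mono) (auto simp: indicator_def)
      finally show ?thesis .
    qed simp
  qed
  also have "\<dots> = (\<integral>\<^sup>+l. \<integral>\<^sup>+\<omega>. indicator (H l) \<omega> \<partial>M \<partial>count_space L)"
    using H by (intro nn_integral_count_space_nn_integral L) auto
  also have "\<dots> = (\<integral>\<^sup>+l. emeasure M (H l) \<partial>count_space L)"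
    using H by (intro nn_integral_cong) simp
  finally show ?thesis .
qed

theorem lemma2:
  fixes u :: real and M :: "'w measure" and mu :: "'w \<Rightarrow> (int \<Rightarrow> int ^ 'd::finite) set \<Rightarrow> nat"
    and x y :: "int ^ 'd"
  assumes "CARD('d) \<ge> 3" and "u > 0" and "interlacement_pp u M mu"
  shows "emeasure M {\<omega> \<in> space M. x \<in> interlacement_set (mu \<omega>) \<and> y \<in> interlacement_set (mu \<omega>) \<and>
             (\<forall>v\<in>supp (mu \<omega>). \<forall>w\<in>supp (mu \<omega>).
                 graph_dist G_adj (supp (mu \<omega>)) v w \<le> enat (s_d CARD('d) - 1))}
         \<le> (\<Sum>n\<in>{0..s_d CARD('d) - 1}.
              \<integral>\<^sup>+ zs. (\<Prod>i\<in>{0..n}.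
                   let z = x # zs @ [y] in
                   \<integral>\<^sup>+ \<omega>. pmass (mu \<omega>) (S_both (z ! i) (z ! (i + 1))) \<partial>M)
              \<partial>count_space {zs. length zs = n})"
  (is "emeasure M ?E \<le> (\<Sum>n\<in>{0..?K}. ?bound n)")
proof -
  note pp = assms(3) and u = less_imp_le[OF assms(2)]
  define V where "V n = (\<Union>zs\<in>{zs. length zs = n}. chain_event M mu (x # zs @ [y]) n)" for n
  have countable: "countable {zs :: 'd pt list. length zs = n}" for n
    by (rule countable_subset[OF _ countable_lists[of UNIV]]) auto
  have sets: "chain_event M mu (x # zs @ [y]) n \<in> sets M" for zs n
    by (rule chain_event_sets[OF pp u])
  have W: "\<forall>\<omega>\<in>space M. \<forall>c. c \<notin> Wstar \<longrightarrow> mu \<omega> c = 0"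
    using pp unfolding interlacement_pp_def by blast
  have "?E \<subseteq> (\<Union>n\<in>{0..?K}. V n)"
  proof
    fix \<omega> assume "\<omega> \<in> ?E"
    then have sp: "\<omega> \<in> space M" and hx: "x \<in> interlacement_set (mu \<omega>)"
      and hy: "y \<in> interlacement_set (mu \<omega>)"
      and hd: "\<forall>v\<in>supp (mu \<omega>). \<forall>w\<in>supp (mu \<omega>). graph_dist G_adj (supp (mu \<omega>)) v w \<le> enat ?K"
      by simp_all
    obtain n zs where nzs: "n \<le> ?K" "length zs = n" "\<omega> \<in> chain_event M mu (x # zs @ [y]) n"
      using connected_in_chain_event[where mu = mu, OF sp bspec[OF W sp] hx hy hd] by blast
    then have "\<omega> \<in> V n" unfolding V_def by blast
    then show "\<omega> \<in> (\<Union>n\<in>{0..?K}. V n)" using nzs(1) by (intro UN_I[of n]) simp_all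
  qed
  moreover have V_sets: "V n \<in> sets M" for n
    unfolding V_def using countable sets by (rule sets.countable_UN'')
  ultimately have "emeasure M ?E \<le> emeasure M (\<Union>n\<in>{0..?K}. V n)"
    by (intro emeasure_mono) auto
  also have "\<dots> \<le> (\<Sum>n\<in>{0..?K}. emeasure M (V n))"
    using V_sets by (intro emeasure_subadditive_finite) auto
  also have "\<dots> \<le> (\<Sum>n\<in>{0..?K}. ?bound n)"
  proof (rule sum_mono)
    fix n
    have "emeasure M (V n) \<le> (\<integral>\<^sup>+zs. emeasure M (chain_event M mu (x # zs @ [y]) n) \<partial>count_space {zs. length zs = n})"
      unfolding V_def by (rule emeasure_UN_countable_le[OF countable sets])
    also have "\<dots> \<le> ?bound n"
      unfolding Let_def by (intro nn_integral_mono chain_event_bound[OF pp u]) simp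
    finally show "emeasure M (V n) \<le> ?bound n" .
  qed
  finally show ?thesis .
qed

end
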